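(* Let $(\pi,T,\eta,\mu)$ be a $T$-invariant random system which is time reversible with time-reversing map $\tilde J$, and let $J$ be the induced unitary composition operator $Jf=f\circ J$ on $L^2(X,\mu)$. Then, as operators on $L^2(X,\mu)$, $P_{\eta,T}^*=J^*P_{\eta,T}J$.
   Context: A measured fibration is a measurable map $\pi:\mathcal M\to X$ between Borel spaces together with a family $\eta=\{\eta_x\}_{x\in X}$ of probability measures on $\mathcal M$ with $\eta_x(\pi^{-1}(x))=1$ for every $x$, measurable in the sense that $x\mapsto\eta_x(f)=\int f\,d\eta_x$ is Borel for every Borel $f:\mathcal M\to[0,\infty]$. A random system $(\pi,T,\eta,\mu)$ consists of such a measured fibration, a measurable map $T:\mathcal M\to\mathcal M$, and a probability measure $\mu$ on $X$; $\mu\circ\eta$ is the probability measure on $\mathcal M$ with $(\mu\circ\eta)(f)=\int_X\eta_x(f)\,d\mu(x)$. The Markov operator is $(P_{\eta,T}f)(x)=\int_{\pi^{-1}(x)}f(\pi(T(\xi)))\,d\eta_x(\xi)$. The random system is $T$-invariant if $T$ is a measurable isomorphism and $\nu:=\mu\circ\eta$ satisfies $T_*\nu=\nu$. It is time reversible if there is a measurable isomorphism $\tilde J:\mathcal M\to\mathcal M$ mapping fibers of $\pi$ to fibers, with $\tilde J_*\nu=\nu$ and $T\circ\tilde J=\tilde J\circ T^{-1}$; then $\tilde J$ induces a $\mu$-preserving measurable isomorphism $J:X\to X$ with $J\circ\pi=\pi\circ\tilde J$, and $\tilde J$ is called the time-reversing map. *)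

theory Defs
  imports "HOL-Probability.Probability"
begin

text \<open>Borel spaces are modelled as measurable spaces in which all points are measurable.\<close>
definition points_measurable :: "'a measure \<Rightarrow> bool" where
  "points_measurable M \<longleftrightarrow> (\<forall>x\<in>space M. {x} \<in> sets M)"

definition meas_iso :: "'a measure \<Rightarrow> 'b measure \<Rightarrow> ('a \<Rightarrow> 'b) \<Rightarrow> bool" where
  "meas_iso M N f \<longleftrightarrow> bij_betw f (space M) (space N) \<and> f \<in> measurable M N
     \<and> the_inv_into (space M) f \<in> measurable N M"

definition measured_fibration ::
    "'m measure \<Rightarrow> 'x measure \<Rightarrow> ('m \<Rightarrow> 'x) \<Rightarrow> ('x \<Rightarrow> 'm measure) \<Rightarrow> bool" where
  "measured_fibration M X \<pi> \<eta> \<longleftrightarrow>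
     points_measurable M \<and> points_measurable X \<and>
     \<pi> \<in> measurable M X \<and>
     (\<forall>x\<in>space X. prob_space (\<eta> x) \<and> sets (\<eta> x) = sets M \<and>
         emeasure (\<eta> x) (\<pi> -` {x} \<inter> space M) = 1) \<and>
     (\<forall>f \<in> borel_measurable M. (\<lambda>x. \<integral>\<^sup>+ \<xi>. f \<xi> \<partial>\<eta> x) \<in> borel_measurable X)"

definition comp_kernel :: "'x measure \<Rightarrow> ('x \<Rightarrow> 'm measure) \<Rightarrow> 'm measure" where
  "comp_kernel \<mu> \<eta> = bind \<mu> \<eta>"

definition markov_op ::
    "('m \<Rightarrow> 'x) \<Rightarrow> ('m \<Rightarrow> 'm) \<Rightarrow> ('x \<Rightarrow> 'm measure) \<Rightarrow> ('x \<Rightarrow> real) \<Rightarrow> 'x \<Rightarrow> real" where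
  "markov_op \<pi> T \<eta> f x = (\<integral>\<xi>. f (\<pi> (T \<xi>)) \<partial>\<eta> x)"

text \<open>Random system (pi,T,eta,mu); the base space X is space mu with sets mu.\<close>
definition random_system ::
    "'m measure \<Rightarrow> 'x measure \<Rightarrow> ('m \<Rightarrow> 'x) \<Rightarrow> ('m \<Rightarrow> 'm) \<Rightarrow> ('x \<Rightarrow> 'm measure) \<Rightarrow> bool" where
  "random_system M \<mu> \<pi> T \<eta> \<longleftrightarrow> measured_fibration M \<mu> \<pi> \<eta> \<and> T \<in> measurable M M \<and> prob_space \<mu>"

definition T_invariant ::
    "'m measure \<Rightarrow> 'x measure \<Rightarrow> ('m \<Rightarrow> 'x) \<Rightarrow> ('m \<Rightarrow> 'm) \<Rightarrow> ('x \<Rightarrow> 'm measure) \<Rightarrow> bool" where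
  "T_invariant M \<mu> \<pi> T \<eta> \<longleftrightarrow> random_system M \<mu> \<pi> T \<eta> \<and> meas_iso M M T \<and>
     distr (comp_kernel \<mu> \<eta>) M T = comp_kernel \<mu> \<eta>"

definition time_reversing ::
    "'m measure \<Rightarrow> 'x measure \<Rightarrow> ('m \<Rightarrow> 'x) \<Rightarrow> ('m \<Rightarrow> 'm) \<Rightarrow> ('x \<Rightarrow> 'm measure) \<Rightarrow> ('m \<Rightarrow> 'm) \<Rightarrow> bool" where
  "time_reversing M \<mu> \<pi> T \<eta> Jt \<longleftrightarrow> meas_iso M M Jt \<and>
     (\<forall>\<xi>\<in>space M. \<forall>\<zeta>\<in>space M. \<pi> \<xi> = \<pi> \<zeta> \<longrightarrow> \<pi> (Jt \<xi>) = \<pi> (Jt \<zeta>)) \<and>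
     distr (comp_kernel \<mu> \<eta>) M Jt = comp_kernel \<mu> \<eta> \<and>
     (\<forall>\<xi>\<in>space M. T (Jt \<xi>) = Jt (the_inv_into (space M) T \<xi>))"

definition induced_map ::
    "'m measure \<Rightarrow> 'x measure \<Rightarrow> ('m \<Rightarrow> 'x) \<Rightarrow> ('m \<Rightarrow> 'm) \<Rightarrow> ('x \<Rightarrow> 'x) \<Rightarrow> bool" where
  "induced_map M \<mu> \<pi> Jt J \<longleftrightarrow> meas_iso \<mu> \<mu> J \<and> distr \<mu> \<mu> J = \<mu> \<and>
     (\<forall>\<xi>\<in>space M. J (\<pi> \<xi>) = \<pi> (Jt \<xi>))"

definition L2 :: "'x measure \<Rightarrow> ('x \<Rightarrow> real) set" where
  "L2 \<mu> = {f. f \<in> borel_measurable \<mu> \<and> integrable \<mu> (\<lambda>x. (f x)\<^sup>2)}"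

definition L2_inner :: "'x measure \<Rightarrow> ('x \<Rightarrow> real) \<Rightarrow> ('x \<Rightarrow> real) \<Rightarrow> real" where
  "L2_inner \<mu> f g = (\<integral>x. f x * g x \<partial>\<mu>)"

end

theory Submission
  imports Defs
begin

(* Write nu = mu o eta for the measure on the total space.  Since every eta x is
   concentrated on the fibre over x, integrating a function of the form h(pi xi) k(xi)
   against nu disintegrates as the integral over x of h x times the eta x-integral of k.
   With h = g and k = f o pi o T this turns the Markov inner product into an integral
   over the total space:
       <P f, g> = INT f(pi(T xi)) g(pi xi) dnu.
   Applied to f o J and g o J, and using J o pi = pi o Jt, the right-hand side becomes
   INT f(pi(Jt xi)) g(pi(Jt(T xi))) dnu.  The reversal relation gives
   Jt o T = T^-1 o Jt, so the invariance of nu under Jt and then under T transforms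
   this integral back into the first one. *)

lemma integral_bind_nonneg:
  fixes f :: "'m \<Rightarrow> real"
  assumes K: "K \<in> measurable \<mu> (subprob_algebra M)" and ne: "space \<mu> \<noteq> {}"
    and f[measurable]: "f \<in> borel_measurable M" and nonneg: "\<And>\<xi>. 0 \<le> f \<xi>"
    and int: "integrable (bind \<mu> K) f"
  shows "AE x in \<mu>. integrable (K x) f"
    and "integrable \<mu> (\<lambda>x. \<integral>\<xi>. f \<xi> \<partial>K x)"
    and "(\<integral>\<xi>. f \<xi> \<partial>bind \<mu> K) = (\<integral>x. (\<integral>\<xi>. f \<xi> \<partial>K x) \<partial>\<mu>)"
proof -
  have sets_K: "\<And>x. x \<in> space \<mu> \<Longrightarrow> sets (K x) = sets M"
    using K by (rule subprob_measurableD(2))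
  have sets_bind: "sets (bind \<mu> K) = sets M" using sets_K ne by (rule sets_bind)
  define \<phi> where "\<phi> x = (\<integral>\<^sup>+\<xi>. ennreal (f \<xi>) \<partial>K x)" for x
  have \<phi>_meas: "\<phi> \<in> borel_measurable \<mu>" unfolding \<phi>_def
    by (rule measurable_compose[OF K nn_integral_measurable_subprob_algebra]) simp
  have nn_bind: "(\<integral>\<^sup>+\<xi>. ennreal (f \<xi>) \<partial>bind \<mu> K) = (\<integral>\<^sup>+x. \<phi> x \<partial>\<mu>)"
    unfolding \<phi>_def by (rule nn_integral_bind[OF _ K]) simp
  have finite: "(\<integral>\<^sup>+\<xi>. ennreal (f \<xi>) \<partial>bind \<mu> K) < \<infinity>"
    using integrableD(2)[OF int] nonneg by (simp add: less_top)
  have "AE x in \<mu>. \<phi> x \<noteq> \<infinity>"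
    using nn_integral_PInf_AE[OF \<phi>_meas] finite nn_bind by simp
  then have fibres: "AE x in \<mu>. integrable (K x) f \<and> \<phi> x = ennreal (\<integral>\<xi>. f \<xi> \<partial>K x)"
    using AE_space
  proof eventually_elim
    case (elim x)
    have "f \<in> borel_measurable (K x)"
      using sets_K[OF elim(2)] by (simp cong: measurable_cong_sets)
    then have int_x: "integrable (K x) f"
      by (rule integrableI_bounded) (use elim nonneg in \<open>simp add: \<phi>_def top.not_eq_extremum\<close>)
    moreover have "\<phi> x = ennreal (\<integral>\<xi>. f \<xi> \<partial>K x)"
      unfolding \<phi>_def by (rule nn_integral_eq_integral[OF int_x]) (simp add: nonneg)
    ultimately show ?case by simp
  qed
  then show "AE x in \<mu>. integrable (K x) f" by auto
  have fibre_meas: "(\<lambda>x. \<integral>\<xi>. f \<xi> \<partial>K x) \<in> borel_measurable \<mu>"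
    by (rule measurable_compose[OF K integral_measurable_subprob_algebra]) simp
  have fibre_nonneg: "\<And>x. 0 \<le> (\<integral>\<xi>. f \<xi> \<partial>K x)" by (simp add: nonneg)
  have nn_fibres: "(\<integral>\<^sup>+x. ennreal (\<integral>\<xi>. f \<xi> \<partial>K x) \<partial>\<mu>) = (\<integral>\<^sup>+x. \<phi> x \<partial>\<mu>)"
    by (rule nn_integral_cong_AE) (use fibres in auto)
  show "integrable \<mu> (\<lambda>x. \<integral>\<xi>. f \<xi> \<partial>K x)"
    by (rule integrableI_nonneg[OF fibre_meas]) (use nn_fibres nn_bind finite fibre_nonneg in auto)
  have "(\<integral>\<xi>. f \<xi> \<partial>bind \<mu> K) = enn2real (\<integral>\<^sup>+\<xi>. ennreal (f \<xi>) \<partial>bind \<mu> K)"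
    by (rule integral_eq_nn_integral) (auto simp: nonneg cong: measurable_cong_sets[OF sets_bind])
  also have "\<dots> = enn2real (\<integral>\<^sup>+x. ennreal (\<integral>\<xi>. f \<xi> \<partial>K x) \<partial>\<mu>)"
    using nn_bind nn_fibres by simp
  also have "\<dots> = (\<integral>x. (\<integral>\<xi>. f \<xi> \<partial>K x) \<partial>\<mu>)"
    by (rule integral_eq_nn_integral[symmetric]) (auto simp: fibre_meas fibre_nonneg)
  finally show "(\<integral>\<xi>. f \<xi> \<partial>bind \<mu> K) = (\<integral>x. (\<integral>\<xi>. f \<xi> \<partial>K x) \<partial>\<mu>)" .
qed

lemma integral_bind:
  fixes f :: "'m \<Rightarrow> real"
  assumes K: "K \<in> measurable \<mu> (subprob_algebra M)" and ne: "space \<mu> \<noteq> {}"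
    and f[measurable]: "f \<in> borel_measurable M"
    and int: "integrable (bind \<mu> K) f"
  shows "(\<integral>\<xi>. f \<xi> \<partial>bind \<mu> K) = (\<integral>x. (\<integral>\<xi>. f \<xi> \<partial>K x) \<partial>\<mu>)"
proof -
  define fp where "fp \<xi> = max (f \<xi>) 0" for \<xi>
  define fn where "fn \<xi> = max (- f \<xi>) 0" for \<xi>
  have fp_meas[measurable]: "fp \<in> borel_measurable M" and fn_meas[measurable]: "fn \<in> borel_measurable M"
    unfolding fp_def fn_def by measurable
  have fp_nonneg: "\<And>\<xi>. 0 \<le> fp \<xi>" and fn_nonneg: "\<And>\<xi>. 0 \<le> fn \<xi>" by (auto simp: fp_def fn_def)
  have int_fp: "integrable (bind \<mu> K) fp" and int_fn: "integrable (bind \<mu> K) fn"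
    unfolding fp_def fn_def by (intro integrable_max integrable_minus int; simp)+
  have split: "f \<xi> = fp \<xi> - fn \<xi>" for \<xi> unfolding fp_def fn_def by auto
  note P = integral_bind_nonneg[OF K ne fp_meas fp_nonneg int_fp]
    and N = integral_bind_nonneg[OF K ne fn_meas fn_nonneg int_fn]
  have fibre_meas: "(\<lambda>x. \<integral>\<xi>. h \<xi> \<partial>K x) \<in> borel_measurable \<mu>"
    if "h \<in> borel_measurable M" for h :: "'m \<Rightarrow> real"
    by (rule measurable_compose[OF K integral_measurable_subprob_algebra]) (use that in simp)
  have "(\<integral>\<xi>. f \<xi> \<partial>bind \<mu> K) = (\<integral>\<xi>. fp \<xi> \<partial>bind \<mu> K) - (\<integral>\<xi>. fn \<xi> \<partial>bind \<mu> K)"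
    unfolding split by (rule Bochner_Integration.integral_diff[OF int_fp int_fn])
  also have "\<dots> = (\<integral>x. (\<integral>\<xi>. fp \<xi> \<partial>K x) \<partial>\<mu>) - (\<integral>x. (\<integral>\<xi>. fn \<xi> \<partial>K x) \<partial>\<mu>)"
    using P(3) N(3) by simp
  also have "\<dots> = (\<integral>x. (\<integral>\<xi>. fp \<xi> \<partial>K x) - (\<integral>\<xi>. fn \<xi> \<partial>K x) \<partial>\<mu>)"
    by (rule Bochner_Integration.integral_diff[symmetric])
      (use P(2) N(2) in simp_all)
  also have "\<dots> = (\<integral>x. (\<integral>\<xi>. f \<xi> \<partial>K x) \<partial>\<mu>)"
  proof (rule integral_cong_AE)
    show "AE x in \<mu>. (\<integral>\<xi>. fp \<xi> \<partial>K x) - (\<integral>\<xi>. fn \<xi> \<partial>K x) = (\<integral>\<xi>. f \<xi> \<partial>K x)"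
      using P(1) N(1)
    proof eventually_elim
      case (elim x)
      show ?case unfolding split[abs_def]
        by (rule Bochner_Integration.integral_diff[symmetric]) (use elim in simp_all)
    qed
  qed (intro borel_measurable_diff fibre_meas fp_meas fn_meas f)+
  finally show ?thesis .
qed

lemma integrable_mult_L2:
  assumes "u \<in> L2 N" and "v \<in> L2 N"
  shows "integrable N (\<lambda>x. u x * v x)"
proof (rule Bochner_Integration.integrable_bound)
  show "integrable N (\<lambda>x. (u x)\<^sup>2 + (v x)\<^sup>2)" using assms by (auto simp: L2_def)
  show "(\<lambda>x. u x * v x) \<in> borel_measurable N" using assms by (auto simp: L2_def)
  have "\<bar>u x * v x\<bar> \<le> (u x)\<^sup>2 + (v x)\<^sup>2" for x
  proof -
    have "2 * \<bar>u x\<bar> * \<bar>v x\<bar> \<le> (u x)\<^sup>2 + (v x)\<^sup>2"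
      using sum_squares_bound[of "\<bar>u x\<bar>" "\<bar>v x\<bar>"] by simp
    moreover have "0 \<le> \<bar>u x\<bar> * \<bar>v x\<bar>" by simp
    ultimately show ?thesis unfolding abs_mult by linarith
  qed
  then show "AE x in N. norm (u x * v x) \<le> norm ((u x)\<^sup>2 + (v x)\<^sup>2)" by auto
qed

lemma L2_comp_measure_preserving:
  assumes \<phi>[measurable]: "\<phi> \<in> measurable N M" and preserving: "distr N M \<phi> = M"
    and u: "u \<in> L2 M"
  shows "u \<circ> \<phi> \<in> L2 N"
proof -
  have [measurable]: "u \<in> borel_measurable M" and "integrable M (\<lambda>x. (u x)\<^sup>2)"
    using u by (auto simp: L2_def)
  then have "integrable (distr N M \<phi>) (\<lambda>x. (u x)\<^sup>2)" by (simp add: preserving)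
  then have "integrable N (\<lambda>y. (u (\<phi> y))\<^sup>2)" by (subst (asm) integrable_distr_eq) measurable
  then show ?thesis by (simp add: L2_def)
qed

lemma measured_fibration_kernel:
  assumes "measured_fibration M \<mu> \<pi> \<eta>"
  shows "\<eta> \<in> measurable \<mu> (subprob_algebra M)"
proof (rule measurable_subprob_algebra)
  fix x assume "x \<in> space \<mu>"
  then show "subprob_space (\<eta> x)" and "sets (\<eta> x) = sets M"
    using assms prob_space_imp_subprob_space unfolding measured_fibration_def by blast+
next
  fix A assume A: "A \<in> sets M"
  have "(\<lambda>x. \<integral>\<^sup>+ \<xi>. indicator A \<xi> \<partial>\<eta> x) \<in> borel_measurable \<mu>"
    using assms A unfolding measured_fibration_def by simp
  then show "(\<lambda>x. emeasure (\<eta> x) A) \<in> borel_measurable \<mu>"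
    by (rule measurable_cong[THEN iffD1, rotated])
      (use assms A in \<open>auto simp: measured_fibration_def nn_integral_indicator\<close>)
qed

lemma measured_fibration_AE_fibre:
  assumes fib: "measured_fibration M \<mu> \<pi> \<eta>" and x: "x \<in> space \<mu>"
  shows "AE \<xi> in \<eta> x. \<pi> \<xi> = x"
proof -
  interpret prob_space "\<eta> x" using fib x unfolding measured_fibration_def by blast
  have "\<pi> -` {x} \<inter> space M \<in> sets M"
    using fib x unfolding measured_fibration_def points_measurable_def
    by (intro measurable_sets[where A=\<mu>]) auto
  then have "AE \<xi> in \<eta> x. \<xi> \<in> \<pi> -` {x} \<inter> space M"
    using fib x unfolding measured_fibration_def by (intro AE_prob_1) (auto simp: emeasure_eq_measure)
  then show ?thesis by auto
qed

lemma sets_comp_kernel: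
  assumes "measured_fibration M \<mu> \<pi> \<eta>" and "space \<mu> \<noteq> {}"
  shows "sets (comp_kernel \<mu> \<eta>) = sets M"
  using assms unfolding comp_kernel_def measured_fibration_def by (intro sets_bind) auto

lemma distr_comp_kernel_projection:
  assumes fib: "measured_fibration M \<mu> \<pi> \<eta>" and ne: "space \<mu> \<noteq> {}"
  shows "distr (comp_kernel \<mu> \<eta>) \<mu> \<pi> = \<mu>"
proof (rule measure_eqI)
  have [measurable]: "\<pi> \<in> measurable M \<mu>" using fib by (simp add: measured_fibration_def)
  have sets_\<nu>[measurable_cong]: "sets (comp_kernel \<mu> \<eta>) = sets M" by (rule sets_comp_kernel[OF fib ne])
  note K = measured_fibration_kernel[OF fib]
  fix A assume A[measurable]: "A \<in> sets (distr (comp_kernel \<mu> \<eta>) \<mu> \<pi>)"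
  have "emeasure (distr (comp_kernel \<mu> \<eta>) \<mu> \<pi>) A
      = (\<integral>\<^sup>+x. indicator A x \<partial>distr (comp_kernel \<mu> \<eta>) \<mu> \<pi>)"
    using A by simp
  also have "\<dots> = (\<integral>\<^sup>+\<xi>. indicator A (\<pi> \<xi>) \<partial>comp_kernel \<mu> \<eta>)"
    by (rule nn_integral_distr) measurable
  also have "\<dots> = (\<integral>\<^sup>+x. \<integral>\<^sup>+\<xi>. indicator A (\<pi> \<xi>) \<partial>\<eta> x \<partial>\<mu>)"
    unfolding comp_kernel_def by (rule nn_integral_bind[OF _ K]) measurable
  also have "\<dots> = (\<integral>\<^sup>+x. indicator A x \<partial>\<mu>)"
  proof (rule nn_integral_cong)
    fix x assume x: "x \<in> space \<mu>"
    interpret prob_space "\<eta> x" using fib x unfolding measured_fibration_def by blast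
    have "(\<integral>\<^sup>+\<xi>. indicator A (\<pi> \<xi>) \<partial>\<eta> x) = (\<integral>\<^sup>+\<xi>. indicator A x \<partial>\<eta> x)"
      by (rule nn_integral_cong_AE) (use measured_fibration_AE_fibre[OF fib x] in auto)
    then show "(\<integral>\<^sup>+\<xi>. indicator A (\<pi> \<xi>) \<partial>\<eta> x) = indicator A x" by (simp add: emeasure_space_1)
  qed
  also have "\<dots> = emeasure \<mu> A" using A by simp
  finally show "emeasure (distr (comp_kernel \<mu> \<eta>) \<mu> \<pi>) A = emeasure \<mu> A" .
qed simp

lemma integral_comp_kernel_disintegration:
  fixes h :: "'x \<Rightarrow> real" and k :: "'m \<Rightarrow> real"
  assumes fib: "measured_fibration M \<mu> \<pi> \<eta>" and ne: "space \<mu> \<noteq> {}"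
    and [measurable]: "h \<in> borel_measurable \<mu>" "k \<in> borel_measurable M"
    and int: "integrable (comp_kernel \<mu> \<eta>) (\<lambda>\<xi>. h (\<pi> \<xi>) * k \<xi>)"
  shows "(\<integral>x. h x * (\<integral>\<xi>. k \<xi> \<partial>\<eta> x) \<partial>\<mu>) = (\<integral>\<xi>. h (\<pi> \<xi>) * k \<xi> \<partial>comp_kernel \<mu> \<eta>)"
proof -
  have [measurable]: "\<pi> \<in> measurable M \<mu>" using fib by (simp add: measured_fibration_def)
  have "(\<integral>\<xi>. h (\<pi> \<xi>) * k \<xi> \<partial>comp_kernel \<mu> \<eta>) = (\<integral>x. (\<integral>\<xi>. h (\<pi> \<xi>) * k \<xi> \<partial>\<eta> x) \<partial>\<mu>)"
    using int unfolding comp_kernel_def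
    by (intro integral_bind[OF measured_fibration_kernel[OF fib] ne]) measurable
  also have "\<dots> = (\<integral>x. h x * (\<integral>\<xi>. k \<xi> \<partial>\<eta> x) \<partial>\<mu>)"
  proof (rule Bochner_Integration.integral_cong[OF refl])
    fix x assume x: "x \<in> space \<mu>"
    have "(\<integral>\<xi>. h (\<pi> \<xi>) * k \<xi> \<partial>\<eta> x) = (\<integral>\<xi>. h x * k \<xi> \<partial>\<eta> x)"
      by (rule integral_cong_AE) (use measured_fibration_AE_fibre[OF fib x] fib x in
          \<open>auto simp: measured_fibration_def cong: measurable_cong_sets\<close>)
    then show "(\<integral>\<xi>. h (\<pi> \<xi>) * k \<xi> \<partial>\<eta> x) = h x * (\<integral>\<xi>. k \<xi> \<partial>\<eta> x)" by simp
  qed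
  finally show ?thesis ..
qed

lemma markov_op_inner:
  assumes fib: "measured_fibration M \<mu> \<pi> \<eta>" and ne: "space \<mu> \<noteq> {}"
    and T[measurable]: "T \<in> measurable M M" and invariant: "distr (comp_kernel \<mu> \<eta>) M T = comp_kernel \<mu> \<eta>"
    and f: "f \<in> L2 \<mu>" and g: "g \<in> L2 \<mu>"
  shows "L2_inner \<mu> (markov_op \<pi> T \<eta> f) g = (\<integral>\<xi>. f (\<pi> (T \<xi>)) * g (\<pi> \<xi>) \<partial>comp_kernel \<mu> \<eta>)"
proof -
  define \<nu> where "\<nu> = comp_kernel \<mu> \<eta>"
  have sets_\<nu>[measurable_cong]: "sets \<nu> = sets M" unfolding \<nu>_def by (rule sets_comp_kernel[OF fib ne])
  have [measurable]: "\<pi> \<in> measurable M \<mu>" using fib by (simp add: measured_fibration_def)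
  have [measurable]: "f \<in> borel_measurable \<mu>" "g \<in> borel_measurable \<mu>" using f g by (auto simp: L2_def)
  have lift: "u \<circ> \<pi> \<in> L2 \<nu>" if "u \<in> L2 \<mu>" for u
    using distr_comp_kernel_projection[OF fib ne] that unfolding \<nu>_def[symmetric]
    by (intro L2_comp_measure_preserving) measurable
  have T_\<nu>: "T \<in> measurable \<nu> \<nu>" by measurable
  have "distr \<nu> \<nu> T = distr \<nu> M T" by (rule distr_cong) (simp_all add: sets_\<nu>)
  then have "distr \<nu> \<nu> T = \<nu>" using invariant by (simp add: \<nu>_def)
  then have "(f \<circ> \<pi>) \<circ> T \<in> L2 \<nu>" by (rule L2_comp_measure_preserving[OF T_\<nu> _ lift[OF f]])
  then have "integrable \<nu> (\<lambda>\<xi>. g (\<pi> \<xi>) * f (\<pi> (T \<xi>)))"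
    using integrable_mult_L2[OF lift[OF g]] by (simp add: o_def)
  then have "(\<integral>x. g x * markov_op \<pi> T \<eta> f x \<partial>\<mu>) = (\<integral>\<xi>. g (\<pi> \<xi>) * f (\<pi> (T \<xi>)) \<partial>\<nu>)"
    unfolding markov_op_def \<nu>_def by (intro integral_comp_kernel_disintegration[OF fib ne]) measurable
  then show ?thesis by (simp add: L2_inner_def \<nu>_def mult.commute)
qed

lemma time_reversal_integral:
  fixes a b :: "'m \<Rightarrow> real"
  assumes sets_\<nu>[measurable_cong]: "sets \<nu> = sets M"
    and T: "meas_iso M M T" and Jt[measurable]: "Jt \<in> measurable M M"
    and T_inv: "distr \<nu> M T = \<nu>" and Jt_inv: "distr \<nu> M Jt = \<nu>"
    and reversal: "\<And>\<xi>. \<xi> \<in> space M \<Longrightarrow> T (Jt \<xi>) = Jt (the_inv_into (space M) T \<xi>)"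
    and [measurable]: "a \<in> borel_measurable M" "b \<in> borel_measurable M"
  shows "(\<integral>\<xi>. a (Jt \<xi>) * b (Jt (T \<xi>)) \<partial>\<nu>) = (\<integral>\<xi>. a (T \<xi>) * b \<xi> \<partial>\<nu>)"
proof -
  define Ti where "Ti = the_inv_into (space M) T"
  have [measurable]: "T \<in> measurable M M" "Ti \<in> measurable M M"
    using T unfolding meas_iso_def Ti_def by auto
  have Ti_T: "\<And>\<xi>. \<xi> \<in> space M \<Longrightarrow> Ti (T \<xi>) = \<xi>"
    using T unfolding meas_iso_def Ti_def by (meson bij_betw_imp_inj_on the_inv_into_f_f)
  have in_M: "\<And>F \<xi>. F \<in> measurable M M \<Longrightarrow> \<xi> \<in> space M \<Longrightarrow> F \<xi> \<in> space M"
    by (meson measurable_space)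
  have Jt_T: "Jt (T \<xi>) = Ti (Jt \<xi>)" if \<xi>: "\<xi> \<in> space M" for \<xi>
  proof -
    have "T (Jt (T \<xi>)) = Jt \<xi>" using reversal[OF in_M[OF _ \<xi>]] Ti_T[OF \<xi>] by (simp add: Ti_def)
    then show ?thesis using Ti_T[OF in_M[OF Jt in_M[OF _ \<xi>]]] by (metis \<open>T \<in> M \<rightarrow>\<^sub>M M\<close>)
  qed
  have space_\<nu>: "space \<nu> = space M" by (rule sets_eq_imp_space_eq[OF sets_\<nu>])
  have "(\<integral>\<xi>. a (Jt \<xi>) * b (Jt (T \<xi>)) \<partial>\<nu>) = (\<integral>\<xi>. a (Jt \<xi>) * b (Ti (Jt \<xi>)) \<partial>\<nu>)"
    by (rule Bochner_Integration.integral_cong[OF refl]) (simp add: Jt_T space_\<nu>)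
  also have "\<dots> = (\<integral>\<zeta>. a \<zeta> * b (Ti \<zeta>) \<partial>distr \<nu> M Jt)"
    by (rule integral_distr[symmetric]) measurable
  also have "\<dots> = (\<integral>\<zeta>. a \<zeta> * b (Ti \<zeta>) \<partial>distr \<nu> M T)" by (simp add: Jt_inv T_inv)
  also have "\<dots> = (\<integral>\<xi>. a (T \<xi>) * b (Ti (T \<xi>)) \<partial>\<nu>)"
    by (rule integral_distr) measurable
  also have "\<dots> = (\<integral>\<xi>. a (T \<xi>) * b \<xi> \<partial>\<nu>)"
    by (rule Bochner_Integration.integral_cong[OF refl]) (simp add: Ti_T space_\<nu>)
  finally show ?thesis .
qed

theorem proposition2p3:
  fixes M :: "'m measure" and \<mu> :: "'x measure"
    and \<pi> :: "'m \<Rightarrow> 'x" and T Jt :: "'m \<Rightarrow> 'm" and \<eta> :: "'x \<Rightarrow> 'm measure"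
    and J :: "'x \<Rightarrow> 'x"
  assumes "T_invariant M \<mu> \<pi> T \<eta>"
    and "time_reversing M \<mu> \<pi> T \<eta> Jt"
    and "induced_map M \<mu> \<pi> Jt J"
  shows "\<forall>f\<in>L2 \<mu>. \<forall>g\<in>L2 \<mu>.
           L2_inner \<mu> (markov_op \<pi> T \<eta> f) g
         = L2_inner \<mu> (f \<circ> J) (markov_op \<pi> T \<eta> (g \<circ> J))"
proof (intro ballI)
  fix f g assume f: "f \<in> L2 \<mu>" and g: "g \<in> L2 \<mu>"
  define \<nu> where "\<nu> = comp_kernel \<mu> \<eta>"
  have fib: "measured_fibration M \<mu> \<pi> \<eta>" and T: "meas_iso M M T" and T_inv: "distr \<nu> M T = \<nu>"
    and "prob_space \<mu>"
    using assms(1) unfolding T_invariant_def random_system_def \<nu>_def by auto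
  then have ne: "space \<mu> \<noteq> {}" by (simp add: prob_space.not_empty)
  have T_meas[measurable]: "T \<in> measurable M M" and [measurable]: "\<pi> \<in> measurable M \<mu>"
    using T fib by (auto simp: meas_iso_def measured_fibration_def)
  have [measurable]: "Jt \<in> measurable M M" and Jt_inv: "distr \<nu> M Jt = \<nu>"
    and reversal: "\<And>\<xi>. \<xi> \<in> space M \<Longrightarrow> T (Jt \<xi>) = Jt (the_inv_into (space M) T \<xi>)"
    using assms(2) unfolding time_reversing_def meas_iso_def \<nu>_def by auto
  have J_meas: "J \<in> measurable \<mu> \<mu>" and J_inv: "distr \<mu> \<mu> J = \<mu>"
    and J_\<pi>: "\<And>\<xi>. \<xi> \<in> space M \<Longrightarrow> J (\<pi> \<xi>) = \<pi> (Jt \<xi>)"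
    using assms(3) unfolding induced_map_def meas_iso_def by auto
  have [measurable]: "f \<in> borel_measurable \<mu>" "g \<in> borel_measurable \<mu>" using f g by (auto simp: L2_def)
  have sets_\<nu>: "sets \<nu> = sets M" unfolding \<nu>_def by (rule sets_comp_kernel[OF fib ne])
  note inner = markov_op_inner[OF fib ne T_meas T_inv[unfolded \<nu>_def]]
  have "L2_inner \<mu> (f \<circ> J) (markov_op \<pi> T \<eta> (g \<circ> J)) = L2_inner \<mu> (markov_op \<pi> T \<eta> (g \<circ> J)) (f \<circ> J)"
    by (simp add: L2_inner_def mult.commute)
  also have "\<dots> = (\<integral>\<xi>. g (J (\<pi> (T \<xi>))) * f (J (\<pi> \<xi>)) \<partial>\<nu>)"
    using inner[OF L2_comp_measure_preserving[OF J_meas J_inv g] L2_comp_measure_preserving[OF J_meas J_inv f]]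
    by (simp add: \<nu>_def)
  also have "\<dots> = (\<integral>\<xi>. f (\<pi> (Jt \<xi>)) * g (\<pi> (Jt (T \<xi>))) \<partial>\<nu>)"
    by (rule Bochner_Integration.integral_cong[OF refl])
      (simp add: J_\<pi> measurable_space[OF T_meas] sets_eq_imp_space_eq[OF sets_\<nu>])
  also have "\<dots> = (\<integral>\<xi>. f (\<pi> (T \<xi>)) * g (\<pi> \<xi>) \<partial>\<nu>)"
    by (rule time_reversal_integral[OF sets_\<nu> T _ T_inv Jt_inv reversal]) measurable
  also have "\<dots> = L2_inner \<mu> (markov_op \<pi> T \<eta> f) g"
    using inner[OF f g] by (simp add: \<nu>_def)
  finally show "L2_inner \<mu> (markov_op \<pi> T \<eta> f) g = L2_inner \<mu> (f \<circ> J) (markov_op \<pi> T \<eta> (g \<circ> J))" ..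
qed

end
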